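(* Let $B>0$ and $d\ge1$. The compressor $\mathcal{M}_{B,0}$ is not differentially private, i.e., there is no finite $\epsilon>0$ for which $\mathcal{M}_{B,0}$ is $\epsilon$-differentially private. When $\beta>0$, the compressor $\mathcal{M}_{B,\beta}$ is $d\cdot\log\left(\frac{2B+\beta}{\beta}\right)$-differentially private (for all gradient inputs in $\mathbb{R}^d$).
   Context: For $B>0$, the clipping function is $\mathrm{clip}\{g,B\}=\max\{-B,\min\{B,g\}\}$ for $g\in\mathbb{R}$. For $\beta\ge0$ and $B>0$, the randomized compressor $\mathcal{M}_{B,\beta}:\mathbb{R}^d\to\{-1,1\}^d$ acts independently on each coordinate: for $\boldsymbol g\in\mathbb{R}^d$ with coordinates $g_i$, $[\mathcal{M}_{B,\beta}]_i(\boldsymbol g)=1$ with probability $\frac{B+\beta+\mathrm{clip}\{g_i,B\}}{2B+2\beta}$ and $=-1$ otherwise. A randomized algorithm $\mathcal{M}$ with domain $\mathbb{R}^d$ is $\epsilon$-differentially private if $\Pr[\mathcal{M}(x)\in\mathcal{S}]\le e^{\epsilon}\Pr[\mathcal{M}(y)\in\mathcal{S}]$ for all subsets $\mathcal{S}$ of the range of $\mathcal{M}$ and all $x,y\in\mathbb{R}^d$ with $\|x-y\|_1\le1$. *)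

theory Defs
  imports "HOL-Analysis.Analysis" "HOL-Probability.Probability"
begin

definition clip :: "real \<Rightarrow> real \<Rightarrow> real" where
  "clip g B = max (- B) (min B g)"

definition compressor :: "real \<Rightarrow> real \<Rightarrow> real ^ 'n::finite \<Rightarrow> ('n \<Rightarrow> int) pmf" where
  "compressor B \<beta> g = Pi_pmf UNIV 0
     (\<lambda>i. map_pmf (\<lambda>b. if b then 1 else -1)
            (bernoulli_pmf ((B + \<beta> + clip (g $ i) B) / (2 * B + 2 * \<beta>))))"

definition l1_dist :: "real ^ 'n::finite \<Rightarrow> real ^ 'n \<Rightarrow> real" where
  "l1_dist x y = (\<Sum>i\<in>UNIV. \<bar>x $ i - y $ i\<bar>)"

definition diff_private :: "(real ^ 'n::finite \<Rightarrow> 'b pmf) \<Rightarrow> real \<Rightarrow> bool" where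
  "diff_private M \<epsilon> \<longleftrightarrow>
     (\<forall>S x y. l1_dist x y \<le> 1 \<longrightarrow>
        measure_pmf.prob (M x) S \<le> exp \<epsilon> * measure_pmf.prob (M y) S)"

end

theory Submission
  imports Defs
begin

text \<open>Each coordinate of \<open>compressor B \<beta> g\<close> is \<open>1\<close> with a probability \<open>p\<close> in
  \<open>[m, 1 - m]\<close>, where \<open>m = \<beta> / (2 * B + 2 * \<beta>)\<close>, so the probabilities of any sign under two
  inputs differ by a factor of at most \<open>(1 - m) / m = (2 * B + \<beta>) / \<beta>\<close>; the coordinates are
  independent, hence the probabilities of a sign vector differ by at most the \<open>d\<close>-th power of
  that factor. For \<open>\<beta> = 0\<close> we have \<open>m = 0\<close>: the input \<open>(-B, \<dots>, -B)\<close> never produces the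
  all-ones vector, while an input at \<open>\<ell>\<^sub>1\<close>-distance \<open>1\<close> with all entries above \<open>-B\<close> does.\<close>

definition sign_pmf :: "real \<Rightarrow> int pmf" where
  "sign_pmf p = map_pmf (\<lambda>b. if b then 1 else -1) (bernoulli_pmf p)"

definition compressor_prob :: "real \<Rightarrow> real \<Rightarrow> real \<Rightarrow> real" where
  "compressor_prob B \<beta> g = (B + \<beta> + clip g B) / (2 * B + 2 * \<beta>)"

lemma clip_bounds:
  assumes "B \<ge> 0"
  shows "- B \<le> clip g B" "clip g B \<le> B"
  using assms unfolding clip_def by auto

lemma pmf_sign_pmf:
  assumes "0 \<le> p" "p \<le> 1"
  shows "pmf (sign_pmf p) v = (if v = 1 then p else if v = -1 then 1 - p else 0)"
proof -
  have "(\<lambda>b. if b then 1 else -1) -` {v} = (if v = 1 then {True} else if v = -1 then {False} else {})"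
    by (auto split: if_splits)
  then show ?thesis
    using assms by (auto simp: sign_pmf_def pmf_map measure_pmf_single)
qed

lemma pmf_sign_pmf_le:
  assumes "0 < m" "m \<le> p" "p \<le> 1 - m" "m \<le> q" "q \<le> 1 - m"
  shows "pmf (sign_pmf p) v \<le> (1 - m) / m * pmf (sign_pmf q) v"
proof -
  have ratio_ge: "1 - m \<le> (1 - m) / m * t" if "m \<le> t" for t
  proof -
    have "1 - m = (1 - m) / m * m" using \<open>0 < m\<close> by simp
    also have "\<dots> \<le> (1 - m) / m * t"
      using assms that by (intro mult_left_mono) auto
    finally show ?thesis .
  qed
  have "p \<le> (1 - m) / m * q" "1 - p \<le> (1 - m) / m * (1 - q)"
    using assms ratio_ge[of q] ratio_ge[of "1 - q"] by auto
  then show ?thesis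
    using assms by (simp add: pmf_sign_pmf)
qed

lemma compressor_prob_bounds:
  assumes "B \<ge> 0" "\<beta> > 0"
  shows "\<beta> / (2 * B + 2 * \<beta>) \<le> compressor_prob B \<beta> g"
    and "compressor_prob B \<beta> g \<le> 1 - \<beta> / (2 * B + 2 * \<beta>)"
proof -
  have "1 - \<beta> / (2 * B + 2 * \<beta>) = (2 * B + \<beta>) / (2 * B + 2 * \<beta>)"
    using assms by (simp add: field_simps)
  then show "\<beta> / (2 * B + 2 * \<beta>) \<le> compressor_prob B \<beta> g"
    and "compressor_prob B \<beta> g \<le> 1 - \<beta> / (2 * B + 2 * \<beta>)"
    using assms clip_bounds[OF assms(1), of g] unfolding compressor_prob_def
    by (auto intro!: divide_right_mono)
qed

lemma pmf_compressor:
  "pmf (compressor B \<beta> g) f = (\<Prod>i\<in>UNIV. pmf (sign_pmf (compressor_prob B \<beta> (g $ i))) (f i))"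
  unfolding compressor_def sign_pmf_def compressor_prob_def by (rule pmf_Pi') auto

lemma pmf_compressor_le:
  fixes x y :: "real ^ 'n::finite"
  assumes "B \<ge> 0" "\<beta> > 0"
  shows "pmf (compressor B \<beta> x) f \<le> ((2 * B + \<beta>) / \<beta>) ^ CARD('n) * pmf (compressor B \<beta> y) f"
proof -
  define m where "m = \<beta> / (2 * B + 2 * \<beta>)"
  have "m > 0" using assms by (simp add: m_def)
  have "1 - m = (2 * B + \<beta>) / (2 * B + 2 * \<beta>)"
    using assms by (simp add: m_def field_simps)
  then have ratio: "(1 - m) / m = (2 * B + \<beta>) / \<beta>"
    using assms by (simp add: m_def)
  have "pmf (compressor B \<beta> x) f
      \<le> (\<Prod>i\<in>UNIV. (2 * B + \<beta>) / \<beta> * pmf (sign_pmf (compressor_prob B \<beta> (y $ i))) (f i))"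
    unfolding pmf_compressor ratio[symmetric]
    using compressor_prob_bounds[OF assms] \<open>m > 0\<close>
    by (intro prod_mono conjI pmf_nonneg pmf_sign_pmf_le) (auto simp: m_def)
  also have "\<dots> = ((2 * B + \<beta>) / \<beta>) ^ CARD('n) * pmf (compressor B \<beta> y) f"
    by (simp only: pmf_compressor prod.distrib prod_constant)
  finally show ?thesis .
qed

lemma measure_pmf_prob_le_if_pmf_le:
  fixes p q :: "'a pmf"
  assumes "\<And>a. pmf p a \<le> c * pmf q a"
  shows "measure_pmf.prob p S \<le> c * measure_pmf.prob q S"
proof -
  have "measure_pmf.prob p S = infsetsum (pmf p) S"
    by (rule measure_pmf_conv_infsetsum)
  also have "\<dots> \<le> infsetsum (\<lambda>a. c * pmf q a) S"
    using assms by (intro infsetsum_mono abs_summable_on_cmult_right pmf_abs_summable)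
  also have "\<dots> = c * measure_pmf.prob q S"
    by (simp add: infsetsum_cmult_right pmf_abs_summable measure_pmf_conv_infsetsum)
  finally show ?thesis .
qed

lemma diff_private_compressor:
  assumes "B \<ge> 0" "\<beta> > 0"
  shows "diff_private (compressor B \<beta> :: real ^ 'n::finite \<Rightarrow> ('n \<Rightarrow> int) pmf)
           (real CARD('n) * ln ((2 * B + \<beta>) / \<beta>))"
proof -
  have "exp (real CARD('n) * ln ((2 * B + \<beta>) / \<beta>)) = ((2 * B + \<beta>) / \<beta>) ^ CARD('n)"
    using assms by (simp add: exp_of_nat_mult)
  then show ?thesis
    unfolding diff_private_def
    by (metis measure_pmf_prob_le_if_pmf_le pmf_compressor_le[OF assms])
qed

lemma diff_private_pmf_eq_0:
  assumes "diff_private M \<epsilon>" "l1_dist x y \<le> 1" "pmf (M y) a = 0"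
  shows "pmf (M x) a = 0"
proof -
  have "measure_pmf.prob (M x) {a} \<le> exp \<epsilon> * measure_pmf.prob (M y) {a}"
    using assms(1,2) unfolding diff_private_def by blast
  then show ?thesis
    using assms(3) by (simp add: measure_pmf_single pmf_le_0_iff)
qed

lemma pmf_compressor_ones_pos:
  assumes "B > 0" "\<beta> \<ge> 0" "\<And>i. g $ i > - B"
  shows "pmf (compressor B \<beta> g) (\<lambda>_. 1) > 0"
proof -
  have "compressor_prob B \<beta> (g $ i) > 0" for i
  proof -
    have "clip (g $ i) B > - B"
      using assms(1) assms(3)[of i] unfolding clip_def by auto
    then show ?thesis
      using assms(1,2) unfolding compressor_prob_def by (intro divide_pos_pos) linarith+
  qed
  moreover have "compressor_prob B \<beta> (g $ i) \<le> 1" for i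
    using assms clip_bounds[of B "g $ i"] by (simp add: compressor_prob_def)
  ultimately show ?thesis
    unfolding pmf_compressor by (intro prod_pos) (simp add: pmf_sign_pmf less_imp_le)
qed

lemma pmf_compressor_0_ones:
  assumes "B > 0"
  shows "pmf (compressor B 0 (\<chi> i. - B)) (\<lambda>_. 1) = 0"
  using assms by (simp add: pmf_compressor pmf_sign_pmf compressor_prob_def clip_def)

lemma not_diff_private_compressor_0:
  assumes "B > 0"
  shows "\<not> diff_private (compressor B 0 :: real ^ 'n::finite \<Rightarrow> ('n \<Rightarrow> int) pmf) \<epsilon>"
proof
  assume dp: "diff_private (compressor B 0 :: real ^ 'n::finite \<Rightarrow> ('n \<Rightarrow> int) pmf) \<epsilon>"
  define x :: "real ^ 'n" where "x = (\<chi> i. - B + 1 / CARD('n))"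
  have "l1_dist x (\<chi> i. - B) \<le> 1"
    by (simp add: l1_dist_def x_def)
  with dp have "pmf (compressor B 0 x) (\<lambda>_. 1) = 0"
    using pmf_compressor_0_ones[OF assms] by (rule diff_private_pmf_eq_0)
  moreover have "pmf (compressor B 0 x) (\<lambda>_. 1) > 0"
    using assms by (intro pmf_compressor_ones_pos) (auto simp: x_def)
  ultimately show False by simp
qed

theorem theorem2:
  fixes B :: real
  assumes "B > 0"
  shows "\<not> (\<exists>\<epsilon>>0. diff_private (compressor B 0 :: real ^ 'n::finite \<Rightarrow> ('n \<Rightarrow> int) pmf) \<epsilon>)
     \<and> (\<forall>\<beta>>0. diff_private (compressor B \<beta> :: real ^ 'n::finite \<Rightarrow> ('n \<Rightarrow> int) pmf)
              (real CARD('n) * ln ((2 * B + \<beta>) / \<beta>)))"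
  using not_diff_private_compressor_0[OF assms] diff_private_compressor[OF less_imp_le[OF assms]]
  by blast

end
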